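(* Let $H\subseteq G$ be simple groups, and assume $G$ is co-hopfian. Then the inclusion $H\subseteq G$ is a localization if and only if the following three conditions hold: (1) there is an injective homomorphism $j\colon\mathrm{Aut}(H)\to\mathrm{Aut}(G)$ with $j(c_h)=c_h^{G}$ for all $h\in H$; (2) for every subgroup $K\subseteq G$ isomorphic to $H$ there is $\beta\in\mathrm{Aut}(G)$ with $\beta(K)=H$; (3) the only automorphism of $G$ whose restriction to $H$ is the identity of $H$ is $\mathrm{id}_G$ (i.e. the centralizer of $H$ in $\mathrm{Aut}(G)$ is trivial).
   Context: A group homomorphism $i\colon H\to G$ is a localization if for every homomorphism $\varphi\colon H\to G$ there exists a unique homomorphism $\psi\colon G\to G$ with $\psi\circ i=\varphi$; for $H\subseteq G$, "$H\subseteq G$ is a localization" means the inclusion map is a localization. A group is co-hopfian if every injective endomorphism of it is an automorphism. For a group $X$ and $x\in X$, $c_x$ denotes the inner automorphism $y\mapsto x^{-1}yx$ of $X$. For $H\subseteq G$ and $h\in H$, $c_h$ denotes conjugation by $h$ on $H$ and $c_h^{G}$ denotes conjugation by $h$ on $G$. *)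

theory Defs
  imports "HOL-Algebra.Algebra"
begin

text \<open>Simple group (possibly infinite). The library locale simple_group requires
  order G > 1, which excludes infinite groups, so we use this definition instead.\<close>
definition simple_grp :: "('a, 'b) monoid_scheme \<Rightarrow> bool" where
  "simple_grp G \<longleftrightarrow> group G \<and> carrier G \<noteq> {\<one>\<^bsub>G\<^esub>} \<and>
     (\<forall>N. N \<lhd> G \<longrightarrow> N = carrier G \<or> N = {\<one>\<^bsub>G\<^esub>})"

definition co_hopfian :: "('a, 'b) monoid_scheme \<Rightarrow> bool" where
  "co_hopfian G \<longleftrightarrow> (\<forall>f \<in> hom G G. inj_on f (carrier G) \<longrightarrow> f ` carrier G = carrier G)"

definition inner_aut :: "('a, 'b) monoid_scheme \<Rightarrow> 'a \<Rightarrow> ('a \<Rightarrow> 'a)" where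
  "inner_aut G x = (\<lambda>y \<in> carrier G. inv\<^bsub>G\<^esub> x \<otimes>\<^bsub>G\<^esub> y \<otimes>\<^bsub>G\<^esub> x)"

definition localization_incl :: "('a, 'b) monoid_scheme \<Rightarrow> 'a set \<Rightarrow> bool" where
  "localization_incl G H \<longleftrightarrow>
     (\<forall>\<phi> \<in> hom (G\<lparr>carrier := H\<rparr>) G.
        \<exists>\<psi> \<in> hom G G. (\<forall>h \<in> H. \<psi> h = \<phi> h) \<and>
          (\<forall>\<psi>' \<in> hom G G. (\<forall>h \<in> H. \<psi>' h = \<phi> h) \<longrightarrow> (\<forall>x \<in> carrier G. \<psi>' x = \<psi> x)))"

end

theory Submission
  imports Defs
begin

text \<open>An endomorphism of G that is nontrivial on H is injective because G is simple, hence an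
  automorphism because G is co-hopfian. Consequently two endomorphisms agreeing on H either both
  vanish or differ by an automorphism fixing H, so uniqueness of extensions is condition (3).
  For existence, an injective map phi from H to G has image conjugate to H by (2), say under beta,
  so beta o phi is an automorphism alpha of H. Comparing j of alpha c_h alpha^-1 = c_(alpha h)
  with the conjugation by j(alpha) shows that j(alpha) and alpha agree on H, since G is centreless
  when H is a proper subgroup; then beta^-1 o j(alpha) extends phi. Conversely, a localization
  gives j by extending automorphisms of H, and (2) by inverting the extension of an
  isomorphism from H onto K.\<close>

lemma simple_grp_hom_trivial_or_inj:
  assumes "simple_grp M" "group G" "f \<in> hom M G"
  shows "(\<forall>x\<in>carrier M. f x = \<one>\<^bsub>G\<^esub>) \<or> inj_on f (carrier M)"
proof -
  interpret group_hom M G f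
    using assms by (simp add: simple_grp_def group_hom_def group_hom_axioms_def)
  have "kernel M G f = carrier M \<or> kernel M G f = {\<one>\<^bsub>M\<^esub>}"
    using assms(1) normal_kernel by (simp add: simple_grp_def)
  then show ?thesis
    using trivial_ker_imp_inj by (auto simp: kernel_def)
qed

lemma co_hopfian_inj_endo_auto:
  assumes "group G" "co_hopfian G" "f \<in> hom G G" "inj_on f (carrier G)"
  shows "restrict f (carrier G) \<in> auto G"
proof -
  have "bij_betw f (carrier G) (carrier G)"
    using assms(2-4) unfolding co_hopfian_def bij_betw_def by blast
  moreover have "restrict f (carrier G) \<in> hom G G"
    using group.hom_restrict[OF assms(1,3)] by simp
  ultimately show ?thesis
    by (simp add: auto_def Bij_def)
qed

lemma (in group) inner_aut_in_auto:
  assumes "x \<in> carrier G"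
  shows "inner_aut G x \<in> auto G"
proof -
  have "inner_aut G x \<in> hom G G"
  proof (rule homI)
    fix y z assume "y \<in> carrier G" "z \<in> carrier G"
    then show "inner_aut G x (y \<otimes> z) = inner_aut G x y \<otimes> inner_aut G x z"
      using assms by (simp add: inner_aut_def m_assoc) (simp flip: m_assoc)
  qed (use assms in \<open>simp add: inner_aut_def\<close>)
  moreover have "bij_betw (inner_aut G x) (carrier G) (carrier G)"
    using conjugation_is_bij[of "inv x"] assms by (simp add: inner_aut_def)
  ultimately show ?thesis
    by (simp add: auto_def Bij_def inner_aut_def)
qed

lemma carrier_AutoGroup: "carrier (AutoGroup G) = auto G"
  by (simp add: AutoGroup_def)

lemma one_AutoGroup: "\<one>\<^bsub>AutoGroup G\<^esub> = (\<lambda>x\<in>carrier G. x)"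
  by (simp add: AutoGroup_def BijGroup_def)

lemma mult_AutoGroup:
  assumes "\<alpha> \<in> auto G" "\<beta> \<in> auto G"
  shows "\<alpha> \<otimes>\<^bsub>AutoGroup G\<^esub> \<beta> = (\<lambda>x\<in>carrier G. \<alpha> (\<beta> x))"
  using assms by (simp add: AutoGroup_def BijGroup_def auto_def compose_def)

lemma (in group) inv_AutoGroup_apply:
  assumes "\<alpha> \<in> auto G" "x \<in> carrier G"
  shows "(inv\<^bsub>AutoGroup G\<^esub> \<alpha>) (\<alpha> x) = x"
proof -
  interpret A: group "AutoGroup G" by (rule AutoGroup)
  have "inv\<^bsub>AutoGroup G\<^esub> \<alpha> \<in> auto G"
    using assms(1) A.inv_closed by (simp add: carrier_AutoGroup)
  moreover have "inv\<^bsub>AutoGroup G\<^esub> \<alpha> \<otimes>\<^bsub>AutoGroup G\<^esub> \<alpha> = \<one>\<^bsub>AutoGroup G\<^esub>"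
    using assms(1) A.l_inv by (simp add: carrier_AutoGroup)
  ultimately show ?thesis
    using assms by (simp add: mult_AutoGroup one_AutoGroup fun_eq_iff split: if_splits)
qed

lemma (in group) auto_mult_inner_aut:
  assumes "\<gamma> \<in> auto G" "x \<in> carrier G"
  shows "\<gamma> \<otimes>\<^bsub>AutoGroup G\<^esub> inner_aut G x = inner_aut G (\<gamma> x) \<otimes>\<^bsub>AutoGroup G\<^esub> \<gamma>"
proof -
  interpret group_hom G G \<gamma>
    using assms(1) by (simp add: group_hom_def group_hom_axioms_def auto_def)
  show ?thesis
    using assms inner_aut_in_auto[of x] inner_aut_in_auto[of "\<gamma> x"]
    by (auto simp: mult_AutoGroup inner_aut_def intro!: ext)
qed

text \<open>The centre of G is the kernel of the conjugation action, hence trivial or all of G;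
  in the second case every subgroup would be normal.\<close>
lemma (in group) inj_on_inner_aut_if_simple:
  assumes "simple_grp G" "subgroup H G" "H \<noteq> carrier G" "H \<noteq> {\<one>}"
  shows "inj_on (inner_aut G) (carrier G)"
proof -
  let ?conj = "\<lambda>g. \<lambda>h\<in>carrier G. g \<otimes> h \<otimes> inv g"
  interpret conj: group_hom G "BijGroup (carrier G)" ?conj
    using conjugation_is_hom by (simp add: group_hom_def group_hom_axioms_def group_BijGroup)
  have "kernel G (BijGroup (carrier G)) ?conj \<noteq> carrier G"
  proof
    assume "kernel G (BijGroup (carrier G)) ?conj = carrier G"
    then have central: "x \<otimes> h \<otimes> inv x = h" if "x \<in> carrier G" "h \<in> carrier G" for x h
      using that by (auto simp: kernel_def BijGroup_def dest!: fun_cong[where x = h])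
    have "H \<lhd> G"
      using assms(2) central subgroup.subset by (fastforce simp: normal_inv_iff)
    then show False
      using assms by (auto simp: simple_grp_def)
  qed
  then have "kernel G (BijGroup (carrier G)) ?conj = {\<one>}"
    using assms(1) conj.normal_kernel by (auto simp: simple_grp_def)
  then have "inj_on ?conj (carrier G)"
    by (rule conj.trivial_ker_imp_inj)
  moreover have "inner_aut G x = ?conj (inv x)" if "x \<in> carrier G" for x
    using that by (simp add: inner_aut_def)
  ultimately show ?thesis
    by (auto simp: inj_on_def) (metis inv_closed inv_inv)
qed

lemma (in group) inner_aut_subgroup_apply:
  assumes "subgroup H G" "h \<in> H" "y \<in> H"
  shows "inner_aut (G\<lparr>carrier := H\<rparr>) h y = inner_aut G h y"
  using assms(3) subgroup.subset[OF assms(1)]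
  by (auto simp: inner_aut_def m_inv_consistent[OF assms(1,2)])

definition hom_extendable :: "('a, 'b) monoid_scheme \<Rightarrow> 'a set \<Rightarrow> bool" where
  "hom_extendable G H \<longleftrightarrow>
     (\<forall>\<phi> \<in> hom (G\<lparr>carrier := H\<rparr>) G. \<exists>\<psi> \<in> hom G G. \<forall>h \<in> H. \<psi> h = \<phi> h)"

definition endo_determined_on :: "('a, 'b) monoid_scheme \<Rightarrow> 'a set \<Rightarrow> bool" where
  "endo_determined_on G H \<longleftrightarrow>
     (\<forall>\<psi> \<in> hom G G. \<forall>\<psi>' \<in> hom G G. (\<forall>h \<in> H. \<psi> h = \<psi>' h) \<longrightarrow> (\<forall>x \<in> carrier G. \<psi> x = \<psi>' x))"

lemma localization_incl_iff:
  assumes "H \<subseteq> carrier G"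
  shows "localization_incl G H \<longleftrightarrow> hom_extendable G H \<and> endo_determined_on G H"
proof
  assume loc: "localization_incl G H"
  have "hom_extendable G H"
    unfolding hom_extendable_def
  proof
    fix \<phi> assume "\<phi> \<in> hom (G\<lparr>carrier := H\<rparr>) G"
    with loc obtain \<psi> where "\<psi> \<in> hom G G" "\<forall>h \<in> H. \<psi> h = \<phi> h"
      unfolding localization_incl_def by auto
    then show "\<exists>\<psi> \<in> hom G G. \<forall>h \<in> H. \<psi> h = \<phi> h" by blast
  qed
  moreover have "endo_determined_on G H"
    unfolding endo_determined_on_def
  proof (intro ballI impI)
    fix \<psi> \<psi>' x
    assume \<psi>: "\<psi> \<in> hom G G" and \<psi>': "\<psi>' \<in> hom G G" and agree: "\<forall>h \<in> H. \<psi> h = \<psi>' h"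
      and x: "x \<in> carrier G"
    have "\<psi> \<in> hom (G\<lparr>carrier := H\<rparr>) G"
      using \<psi> assms by (auto simp: hom_def)
    with loc obtain \<psi>\<^sub>0 where
      unique: "\<forall>\<chi> \<in> hom G G. (\<forall>h \<in> H. \<chi> h = \<psi> h) \<longrightarrow> (\<forall>y \<in> carrier G. \<chi> y = \<psi>\<^sub>0 y)"
      unfolding localization_incl_def by auto
    have "\<psi> x = \<psi>\<^sub>0 x"
      using bspec[OF unique \<psi>] x by simp
    moreover have "\<psi>' x = \<psi>\<^sub>0 x"
      using bspec[OF unique \<psi>'] agree x by simp
    ultimately show "\<psi> x = \<psi>' x"
      by simp
  qed
  ultimately show "hom_extendable G H \<and> endo_determined_on G H" ..
next
  assume "hom_extendable G H \<and> endo_determined_on G H"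
  then have ext: "hom_extendable G H" and det: "endo_determined_on G H"
    by simp_all
  show "localization_incl G H"
    unfolding localization_incl_def
  proof
    fix \<phi> assume "\<phi> \<in> hom (G\<lparr>carrier := H\<rparr>) G"
    with ext obtain \<psi> where \<psi>: "\<psi> \<in> hom G G" "\<forall>h \<in> H. \<psi> h = \<phi> h"
      unfolding hom_extendable_def by auto
    have "\<forall>x \<in> carrier G. \<psi>' x = \<psi> x" if "\<psi>' \<in> hom G G" "\<forall>h \<in> H. \<psi>' h = \<phi> h" for \<psi>'
      using det that \<psi> unfolding endo_determined_on_def by simp
    with \<psi> show "\<exists>\<psi> \<in> hom G G. (\<forall>h \<in> H. \<psi> h = \<phi> h) \<and>
        (\<forall>\<psi>' \<in> hom G G. (\<forall>h \<in> H. \<psi>' h = \<phi> h) \<longrightarrow> (\<forall>x \<in> carrier G. \<psi>' x = \<psi> x))"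
      by blast
  qed
qed

lemma endo_determined_on_restrict_eq:
  assumes "endo_determined_on G H" "\<psi> \<in> hom G G" "\<psi>' \<in> hom G G" "\<forall>h \<in> H. \<psi> h = \<psi>' h"
  shows "restrict \<psi> (carrier G) = restrict \<psi>' (carrier G)"
proof (rule restrict_ext)
  show "\<psi> x = \<psi>' x" if "x \<in> carrier G" for x
    using assms that unfolding endo_determined_on_def by blast
qed

lemma (in group) auto_fixing_eq_id_if_endo_determined_on:
  assumes "endo_determined_on G H" "H \<subseteq> carrier G" "\<alpha> \<in> auto G" "\<forall>h \<in> H. \<alpha> h = h"
  shows "\<alpha> = (\<lambda>x \<in> carrier G. x)"
proof -
  have "\<alpha> = restrict \<alpha> (carrier G)"
    using assms(3) by (simp add: auto_def Bij_def extensional_restrict)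
  also have "\<dots> = restrict (\<lambda>x \<in> carrier G. x) (carrier G)"
  proof (rule endo_determined_on_restrict_eq[OF assms(1)])
    show "\<alpha> \<in> hom G G" "(\<lambda>x \<in> carrier G. x) \<in> hom G G"
      using assms(3) id_in_auto by (simp_all add: auto_def)
    show "\<forall>h \<in> H. \<alpha> h = (\<lambda>x \<in> carrier G. x) h"
      using assms(2,4) by auto
  qed
  finally show ?thesis
    by simp
qed

locale simple_cohopfian_subgroup = group +
  fixes H :: "'a set"
  assumes H_subgroup: "subgroup H G" and H_simple: "simple_grp (G\<lparr>carrier := H\<rparr>)"
    and G_simple: "simple_grp G" and G_co_hopfian: "co_hopfian G"
begin

abbreviation H\<^sub>G where "H\<^sub>G \<equiv> G\<lparr>carrier := H\<rparr>"

lemma group_H: "group H\<^sub>G"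
  using subgroup.subgroup_is_group[OF H_subgroup is_group] .

lemma H_subset: "H \<subseteq> carrier G"
  using subgroup.subset[OF H_subgroup] .

lemma H_nontrivial: "H \<noteq> {\<one>}"
  using H_simple by (simp add: simple_grp_def)

lemma auto_H_hom: "\<alpha> \<in> auto H\<^sub>G \<Longrightarrow> \<alpha> \<in> hom H\<^sub>G G"
  using H_subset by (auto simp: auto_def hom_def)

lemma endo_trivial_if_trivial_on_H:
  assumes "\<psi> \<in> hom G G" "\<forall>h \<in> H. \<psi> h = \<one>"
  shows "\<forall>x \<in> carrier G. \<psi> x = \<one>"
proof -
  obtain h where h: "h \<in> H" "h \<noteq> \<one>"
    using H_nontrivial subgroup.one_closed[OF H_subgroup] by blast
  have "\<psi> h = \<psi> \<one>"
    using assms h hom_one[OF assms(1) is_group is_group] by simp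
  then have "\<not> inj_on \<psi> (carrier G)"
    using h H_subset by (auto dest: inj_onD)
  then show ?thesis
    using simple_grp_hom_trivial_or_inj[OF G_simple is_group assms(1)] by blast
qed

lemma endo_auto_if_nontrivial_on_H:
  assumes "\<psi> \<in> hom G G" "h \<in> H" "\<psi> h \<noteq> \<one>"
  shows "restrict \<psi> (carrier G) \<in> auto G"
  using simple_grp_hom_trivial_or_inj[OF G_simple is_group assms(1)] assms H_subset
    co_hopfian_inj_endo_auto[OF is_group G_co_hopfian assms(1)] by blast

lemma auto_H_nontrivial:
  assumes "\<alpha> \<in> auto H\<^sub>G"
  obtains h where "h \<in> H" "\<alpha> h \<noteq> \<one>"
proof -
  obtain h where h: "h \<in> H" "h \<noteq> \<one>"
    using H_nontrivial subgroup.one_closed[OF H_subgroup] by blast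
  have "\<alpha> \<one> = \<one>"
    using hom_one[OF auto_H_hom[OF assms] group_H is_group] by simp
  moreover have "inj_on \<alpha> H"
    using assms by (simp add: auto_def Bij_def bij_betw_def)
  ultimately have "\<alpha> h \<noteq> \<one>"
    using h subgroup.one_closed[OF H_subgroup] by (metis inj_onD)
  then show ?thesis
    using h that by blast
qed

lemma conjugate_to_H_if_hom_extendable:
  assumes "hom_extendable G H" "subgroup K G" "G\<lparr>carrier := K\<rparr> \<cong> H\<^sub>G"
  shows "\<exists>\<beta> \<in> auto G. \<beta> ` K = H"
proof -
  have "group (G\<lparr>carrier := K\<rparr>)"
    using subgroup.subgroup_is_group[OF assms(2) is_group] .
  then obtain g where "g \<in> iso H\<^sub>G (G\<lparr>carrier := K\<rparr>)"
    using group.iso_sym[OF _ assms(3)] by (auto simp: is_iso_def)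
  then have g_hom: "g \<in> hom H\<^sub>G G" and g_bij: "bij_betw g H K"
    using subgroup.subset[OF assms(2)] by (auto simp: iso_def hom_def)
  obtain \<psi> where \<psi>: "\<psi> \<in> hom G G" "\<forall>h \<in> H. \<psi> h = g h"
    using assms(1) g_hom by (auto simp: hom_extendable_def)
  obtain h where h: "h \<in> H" "h \<noteq> \<one>"
    using H_nontrivial subgroup.one_closed[OF H_subgroup] by blast
  have "g h \<noteq> g \<one>"
    using g_bij h subgroup.one_closed[OF H_subgroup] by (auto simp: bij_betw_def dest: inj_onD)
  then have "\<psi> h \<noteq> \<one>"
    using \<psi>(2) h hom_one[OF g_hom group_H is_group] by simp
  then have \<alpha>: "restrict \<psi> (carrier G) \<in> auto G"
    using endo_auto_if_nontrivial_on_H \<psi>(1) h(1) by blast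
  define \<beta> where "\<beta> = inv\<^bsub>AutoGroup G\<^esub> (restrict \<psi> (carrier G))"
  have \<beta>_auto: "\<beta> \<in> auto G"
    using group.inv_closed[OF AutoGroup] \<alpha> by (simp add: \<beta>_def carrier_AutoGroup)
  have "restrict \<psi> (carrier G) ` H = g ` H"
    using \<psi>(2) H_subset by (intro image_cong) auto
  then have "\<beta> ` K = \<beta> ` restrict \<psi> (carrier G) ` H"
    using bij_betw_imp_surj_on[OF g_bij] by simp
  also have "\<dots> = (\<lambda>x. x) ` H"
    unfolding image_image \<beta>_def
    using inv_AutoGroup_apply[OF \<alpha>] H_subset by (intro image_cong) auto
  finally show ?thesis
    using \<beta>_auto by blast
qed

lemma restrict_extension_in_auto:
  assumes "\<alpha> \<in> auto H\<^sub>G" "\<psi> \<in> hom G G" "\<forall>h \<in> H. \<psi> h = \<alpha> h"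
  shows "restrict \<psi> (carrier G) \<in> auto G"
proof -
  obtain h where "h \<in> H" "\<alpha> h \<noteq> \<one>"
    by (rule auto_H_nontrivial[OF assms(1)])
  then show ?thesis
    using endo_auto_if_nontrivial_on_H assms(2,3) by metis
qed

lemma restrict_extension_mult:
  assumes det: "endo_determined_on G H" and \<alpha>: "\<alpha> \<in> auto H\<^sub>G" and \<beta>: "\<beta> \<in> auto H\<^sub>G"
    and ext: "\<psi>\<^sub>\<alpha> \<in> hom G G" "\<forall>h \<in> H. \<psi>\<^sub>\<alpha> h = \<alpha> h" "\<psi>\<^sub>\<beta> \<in> hom G G" "\<forall>h \<in> H. \<psi>\<^sub>\<beta> h = \<beta> h"
      "\<psi> \<in> hom G G" "\<forall>h \<in> H. \<psi> h = (\<alpha> \<otimes>\<^bsub>AutoGroup H\<^sub>G\<^esub> \<beta>) h"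
  shows "restrict \<psi> (carrier G)
    = restrict \<psi>\<^sub>\<alpha> (carrier G) \<otimes>\<^bsub>AutoGroup G\<^esub> restrict \<psi>\<^sub>\<beta> (carrier G)"
proof -
  have \<beta>_H: "\<beta> h \<in> H" if "h \<in> H" for h
    using \<beta> that hom_in_carrier[of \<beta> H\<^sub>G H\<^sub>G h] by (simp add: auto_def)
  have "\<psi>\<^sub>\<alpha> \<circ> \<psi>\<^sub>\<beta> \<in> hom G G"
    using ext Group.hom_compose by blast
  moreover have "\<forall>h \<in> H. \<psi> h = (\<psi>\<^sub>\<alpha> \<circ> \<psi>\<^sub>\<beta>) h"
    using ext \<beta>_H by (simp add: mult_AutoGroup[OF \<alpha> \<beta>])
  ultimately have "restrict \<psi> (carrier G) = restrict (\<psi>\<^sub>\<alpha> \<circ> \<psi>\<^sub>\<beta>) (carrier G)"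
    using endo_determined_on_restrict_eq[OF det ext(5)] by blast
  also have "\<dots> = restrict \<psi>\<^sub>\<alpha> (carrier G) \<otimes>\<^bsub>AutoGroup G\<^esub> restrict \<psi>\<^sub>\<beta> (carrier G)"
    using ext restrict_extension_in_auto[OF \<alpha>] restrict_extension_in_auto[OF \<beta>]
    by (auto simp: mult_AutoGroup hom_in_carrier intro!: restrict_ext)
  finally show ?thesis .
qed

lemma aut_extension_if_hom_extendable:
  assumes ext: "hom_extendable G H" and det: "endo_determined_on G H"
  shows "\<exists>j \<in> hom (AutoGroup H\<^sub>G) (AutoGroup G).
    inj_on j (auto H\<^sub>G) \<and> (\<forall>h \<in> H. j (inner_aut H\<^sub>G h) = inner_aut G h)"
proof -
  have "\<forall>\<alpha> \<in> auto H\<^sub>G. \<exists>\<psi>. \<psi> \<in> hom G G \<and> (\<forall>h \<in> H. \<psi> h = \<alpha> h)"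
    using ext auto_H_hom unfolding hom_extendable_def by blast
  then obtain E where E: "\<And>\<alpha>. \<alpha> \<in> auto H\<^sub>G \<Longrightarrow> E \<alpha> \<in> hom G G \<and> (\<forall>h \<in> H. E \<alpha> h = \<alpha> h)"
    by (metis bchoice)
  define j where "j \<alpha> = restrict (E \<alpha>) (carrier G)" for \<alpha>
  have j_on_H: "j \<alpha> h = \<alpha> h" if "\<alpha> \<in> auto H\<^sub>G" "h \<in> H" for \<alpha> h
    using E[OF that(1)] that(2) H_subset by (auto simp: j_def)
  have "j \<in> hom (AutoGroup H\<^sub>G) (AutoGroup G)"
  proof (rule homI)
    fix \<alpha> \<beta> assume "\<alpha> \<in> carrier (AutoGroup H\<^sub>G)" "\<beta> \<in> carrier (AutoGroup H\<^sub>G)"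
    then have \<alpha>: "\<alpha> \<in> auto H\<^sub>G" and \<beta>: "\<beta> \<in> auto H\<^sub>G"
      by (simp_all add: carrier_AutoGroup)
    then have "\<alpha> \<otimes>\<^bsub>AutoGroup H\<^sub>G\<^esub> \<beta> \<in> auto H\<^sub>G"
      using monoid.m_closed[OF group.is_monoid[OF group.AutoGroup[OF group_H]]]
      by (simp add: carrier_AutoGroup)
    then show "j (\<alpha> \<otimes>\<^bsub>AutoGroup H\<^sub>G\<^esub> \<beta>) = j \<alpha> \<otimes>\<^bsub>AutoGroup G\<^esub> j \<beta>"
      unfolding j_def using E \<alpha> \<beta> by (intro restrict_extension_mult[OF det \<alpha> \<beta>]) auto
  qed (use E restrict_extension_in_auto in \<open>simp add: carrier_AutoGroup j_def\<close>)
  moreover have "inj_on j (auto H\<^sub>G)"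
  proof (rule inj_onI)
    fix \<alpha> \<beta> assume \<alpha>: "\<alpha> \<in> auto H\<^sub>G" and \<beta>: "\<beta> \<in> auto H\<^sub>G" and "j \<alpha> = j \<beta>"
    then have "\<alpha> h = \<beta> h" if "h \<in> H" for h
      using j_on_H[OF \<alpha> that] j_on_H[OF \<beta> that] by simp
    moreover have "\<alpha> \<in> extensional H" "\<beta> \<in> extensional H"
      using \<alpha> \<beta> by (simp_all add: auto_def Bij_def)
    ultimately show "\<alpha> = \<beta>"
      using extensionalityI[of \<alpha> H \<beta>] by blast
  qed
  moreover have "j (inner_aut H\<^sub>G h) = inner_aut G h" if "h \<in> H" for h
  proof -
    have "inner_aut H\<^sub>G h \<in> auto H\<^sub>G"
      using group.inner_aut_in_auto[OF group_H] that by simp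
    moreover have "inner_aut G h \<in> hom G G"
      using inner_aut_in_auto that H_subset by (auto simp: auto_def)
    ultimately have "j (inner_aut H\<^sub>G h) = restrict (inner_aut G h) (carrier G)"
      unfolding j_def using E inner_aut_subgroup_apply[OF H_subgroup that]
      by (intro endo_determined_on_restrict_eq[OF det]) auto
    then show ?thesis
      by (simp add: inner_aut_def)
  qed
  ultimately show ?thesis
    by blast
qed

lemma endo_determined_on_if_centralizer_trivial:
  assumes triv: "\<forall>\<alpha> \<in> auto G. (\<forall>h \<in> H. \<alpha> h = h) \<longrightarrow> \<alpha> = (\<lambda>x \<in> carrier G. x)"
  shows "endo_determined_on G H"
  unfolding endo_determined_on_def
proof (intro ballI impI)
  fix \<psi> \<psi>' x
  assume \<psi>: "\<psi> \<in> hom G G" and \<psi>': "\<psi>' \<in> hom G G" and agree: "\<forall>h \<in> H. \<psi> h = \<psi>' h"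
    and x: "x \<in> carrier G"
  show "\<psi> x = \<psi>' x"
  proof (cases "\<forall>h \<in> H. \<psi> h = \<one>")
    case True
    then have "\<forall>h \<in> H. \<psi>' h = \<one>"
      using agree by simp
    then show ?thesis
      using endo_trivial_if_trivial_on_H[OF \<psi> True] endo_trivial_if_trivial_on_H[OF \<psi>'] x
      by simp
  next
    case False
    then obtain h where "h \<in> H" "\<psi> h \<noteq> \<one>"
      by blast
    then have a: "restrict \<psi> (carrier G) \<in> auto G" and a': "restrict \<psi>' (carrier G) \<in> auto G"
      using endo_auto_if_nontrivial_on_H \<psi> \<psi>' agree by simp_all
    interpret A: group "AutoGroup G"
      by (rule AutoGroup)
    define \<theta> where "\<theta> = inv\<^bsub>AutoGroup G\<^esub> restrict \<psi>' (carrier G) \<otimes>\<^bsub>AutoGroup G\<^esub> restrict \<psi> (carrier G)"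
    have a'_inv: "inv\<^bsub>AutoGroup G\<^esub> restrict \<psi>' (carrier G) \<in> auto G"
      using a' by (simp flip: carrier_AutoGroup)
    have "\<theta> \<in> auto G"
      using a a'_inv by (simp add: \<theta>_def flip: carrier_AutoGroup)
    moreover have "\<theta> h = h" if "h \<in> H" for h
    proof -
      have "h \<in> carrier G"
        using that H_subset by blast
      then show ?thesis
        using inv_AutoGroup_apply[OF a'] agree that
        by (simp add: \<theta>_def mult_AutoGroup[OF a'_inv a])
    qed
    ultimately have "\<one>\<^bsub>AutoGroup G\<^esub> = \<theta>"
      using triv by (simp add: one_AutoGroup)
    then have "restrict \<psi> (carrier G) = restrict \<psi>' (carrier G)"
      using A.inv_solve_left[OF A.one_closed] a a' by (simp add: \<theta>_def carrier_AutoGroup)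
    then show ?thesis
      using x by (metis restrict_apply')
  qed
qed

lemma aut_extension_agrees_on_H:
  assumes j: "j \<in> hom (AutoGroup H\<^sub>G) (AutoGroup G)"
    and j_inner: "\<forall>h \<in> H. j (inner_aut H\<^sub>G h) = inner_aut G h"
    and proper: "H \<noteq> carrier G" and \<alpha>: "\<alpha> \<in> auto H\<^sub>G" and h: "h \<in> H"
  shows "j \<alpha> h = \<alpha> h"
proof -
  interpret A: group "AutoGroup G"
    by (rule AutoGroup)
  interpret H: group H\<^sub>G
    by (rule group_H)
  have \<alpha>h: "\<alpha> h \<in> H"
    using \<alpha> h hom_in_carrier[of \<alpha> H\<^sub>G H\<^sub>G h] by (simp add: auto_def)
  have \<gamma>: "j \<alpha> \<in> auto G"
    using hom_in_carrier[OF j] \<alpha> by (simp add: carrier_AutoGroup)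
  have inner_H: "inner_aut H\<^sub>G h \<in> auto H\<^sub>G" "inner_aut H\<^sub>G (\<alpha> h) \<in> auto H\<^sub>G"
    using H.inner_aut_in_auto h \<alpha>h by simp_all
  have inner_G: "inner_aut G (j \<alpha> h) \<in> auto G" "inner_aut G (\<alpha> h) \<in> auto G"
    using inner_aut_in_auto \<gamma> h \<alpha>h H_subset hom_in_carrier[of "j \<alpha>" G G h]
    by (auto simp: auto_def)
  have "inner_aut G (j \<alpha> h) \<otimes>\<^bsub>AutoGroup G\<^esub> j \<alpha> = j \<alpha> \<otimes>\<^bsub>AutoGroup G\<^esub> inner_aut G h"
    using auto_mult_inner_aut[OF \<gamma>] h H_subset by auto
  also have "\<dots> = j (\<alpha> \<otimes>\<^bsub>AutoGroup H\<^sub>G\<^esub> inner_aut H\<^sub>G h)"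
    using hom_mult[OF j] \<alpha> inner_H j_inner h by (simp add: carrier_AutoGroup)
  also have "\<dots> = j (inner_aut H\<^sub>G (\<alpha> h) \<otimes>\<^bsub>AutoGroup H\<^sub>G\<^esub> \<alpha>)"
    using H.auto_mult_inner_aut[OF \<alpha>] h by simp
  also have "\<dots> = inner_aut G (\<alpha> h) \<otimes>\<^bsub>AutoGroup G\<^esub> j \<alpha>"
    using hom_mult[OF j] \<alpha> inner_H j_inner \<alpha>h by (simp add: carrier_AutoGroup)
  finally have "inner_aut G (j \<alpha> h) = inner_aut G (\<alpha> h)"
    using A.r_cancel[of "j \<alpha>"] \<gamma> inner_G by (simp add: carrier_AutoGroup)
  moreover have "inj_on (inner_aut G) (carrier G)"
    using inj_on_inner_aut_if_simple[OF G_simple H_subgroup proper H_nontrivial] .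
  ultimately show ?thesis
    using \<gamma> h \<alpha>h H_subset hom_in_carrier[of "j \<alpha>" G G h]
    by (auto simp: auto_def dest: inj_onD)
qed

lemma conjugated_hom_in_auto_H:
  assumes \<phi>: "\<phi> \<in> hom H\<^sub>G G" "inj_on \<phi> H" and \<beta>: "\<beta> \<in> auto G" "\<beta> ` \<phi> ` H = H"
  shows "(\<lambda>h \<in> H. \<beta> (\<phi> h)) \<in> auto H\<^sub>G"
proof -
  have \<phi>_G: "\<phi> ` H \<subseteq> carrier G"
    using hom_in_carrier[OF \<phi>(1)] by auto
  have "(\<lambda>h \<in> H. \<beta> (\<phi> h)) \<in> hom H\<^sub>G H\<^sub>G"
  proof (rule homI)
    fix x y assume "x \<in> carrier H\<^sub>G" "y \<in> carrier H\<^sub>G"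
    then have xy: "x \<in> H" "y \<in> H" "x \<otimes> y \<in> H"
      using subgroup.m_closed[OF H_subgroup] by auto
    have "\<beta> (\<phi> x \<otimes> \<phi> y) = \<beta> (\<phi> x) \<otimes> \<beta> (\<phi> y)"
      using \<beta>(1) \<phi>_G xy by (simp add: auto_def hom_mult image_subset_iff)
    then show "(\<lambda>h \<in> H. \<beta> (\<phi> h)) (x \<otimes>\<^bsub>H\<^sub>G\<^esub> y)
        = (\<lambda>h \<in> H. \<beta> (\<phi> h)) x \<otimes>\<^bsub>H\<^sub>G\<^esub> (\<lambda>h \<in> H. \<beta> (\<phi> h)) y"
      using hom_mult[OF \<phi>(1)] xy by simp
  next
    fix x assume "x \<in> carrier H\<^sub>G"
    then have "\<beta> (\<phi> x) \<in> \<beta> ` \<phi> ` H"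
      by simp
    then show "(\<lambda>h \<in> H. \<beta> (\<phi> h)) x \<in> carrier H\<^sub>G"
      using \<beta>(2) \<open>x \<in> carrier H\<^sub>G\<close> by simp
  qed
  moreover have "bij_betw (\<beta> \<circ> \<phi>) H H"
  proof (rule bij_betw_trans)
    show "bij_betw \<phi> H (\<phi> ` H)"
      using \<phi>(2) by (simp add: bij_betw_def)
    have "inj_on \<beta> (carrier G)"
      using \<beta>(1) by (simp add: auto_def Bij_def bij_betw_def)
    then show "bij_betw \<beta> (\<phi> ` H) H"
      using \<beta>(2) inj_on_subset[OF _ \<phi>_G] unfolding bij_betw_def by simp
  qed
  then have "bij_betw (\<lambda>h \<in> H. \<beta> (\<phi> h)) H H"
    by (rule bij_betw_cong[THEN iffD1, rotated]) simp
  ultimately show ?thesis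
    by (simp add: auto_def Bij_def)
qed

lemma injective_hom_extends:
  assumes j: "j \<in> hom (AutoGroup H\<^sub>G) (AutoGroup G)"
    and j_inner: "\<forall>h \<in> H. j (inner_aut H\<^sub>G h) = inner_aut G h"
    and conj: "\<forall>K. subgroup K G \<and> G\<lparr>carrier := K\<rparr> \<cong> H\<^sub>G \<longrightarrow> (\<exists>\<beta> \<in> auto G. \<beta> ` K = H)"
    and proper: "H \<noteq> carrier G" and \<phi>: "\<phi> \<in> hom H\<^sub>G G" "inj_on \<phi> H"
  shows "\<exists>\<psi> \<in> hom G G. \<forall>h \<in> H. \<psi> h = \<phi> h"
proof -
  interpret A: group "AutoGroup G"
    by (rule AutoGroup)
  interpret \<phi>: group_hom H\<^sub>G G \<phi>
    using group_H \<phi>(1) by (simp add: group_hom_def group_hom_axioms_def is_group)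
  have "subgroup (\<phi> ` H) G"
    using \<phi>.subgroup_img_is_subgroup[OF group.subgroup_self[OF group_H]] by simp
  moreover have "\<phi> \<in> iso H\<^sub>G (G\<lparr>carrier := \<phi> ` H\<rparr>)"
    using \<phi> by (auto simp: iso_def hom_def bij_betw_def)
  then have "G\<lparr>carrier := \<phi> ` H\<rparr> \<cong> H\<^sub>G"
    using group.iso_sym[OF group_H] by (auto simp: is_iso_def)
  ultimately obtain \<beta> where \<beta>: "\<beta> \<in> auto G" "\<beta> ` \<phi> ` H = H"
    using conj by blast
  define \<alpha> where "\<alpha> = (\<lambda>h \<in> H. \<beta> (\<phi> h))"
  have \<alpha>: "\<alpha> \<in> auto H\<^sub>G"
    unfolding \<alpha>_def using conjugated_hom_in_auto_H[OF \<phi> \<beta>] .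
  have \<beta>_inv: "inv\<^bsub>AutoGroup G\<^esub> \<beta> \<in> auto G"
    using \<beta>(1) by (simp flip: carrier_AutoGroup)
  have j\<alpha>: "j \<alpha> \<in> auto G"
    using hom_in_carrier[OF j] \<alpha> by (simp add: carrier_AutoGroup)
  define \<psi> where "\<psi> = inv\<^bsub>AutoGroup G\<^esub> \<beta> \<otimes>\<^bsub>AutoGroup G\<^esub> j \<alpha>"
  have "\<psi> \<in> auto G"
    using \<beta>_inv j\<alpha> by (simp add: \<psi>_def flip: carrier_AutoGroup)
  then have "\<psi> \<in> hom G G"
    by (simp add: auto_def)
  moreover have "\<psi> h = \<phi> h" if h: "h \<in> H" for h
  proof -
    have "j \<alpha> h = \<alpha> h"
      by (rule aut_extension_agrees_on_H[OF j j_inner proper \<alpha> h])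
    also have "\<dots> = \<beta> (\<phi> h)"
      using h by (simp add: \<alpha>_def)
    finally show ?thesis
      using h H_subset inv_AutoGroup_apply[OF \<beta>(1)] \<phi>.hom_closed[of h]
      by (auto simp: \<psi>_def mult_AutoGroup[OF \<beta>_inv j\<alpha>])
  qed
  ultimately show ?thesis
    by blast
qed

lemma hom_extendable_if_conditions:
  assumes aut_ext: "\<exists>j \<in> hom (AutoGroup H\<^sub>G) (AutoGroup G).
      inj_on j (auto H\<^sub>G) \<and> (\<forall>h \<in> H. j (inner_aut H\<^sub>G h) = inner_aut G h)"
    and conj: "\<forall>K. subgroup K G \<and> G\<lparr>carrier := K\<rparr> \<cong> H\<^sub>G \<longrightarrow> (\<exists>\<beta> \<in> auto G. \<beta> ` K = H)"
  shows "hom_extendable G H"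
  unfolding hom_extendable_def
proof
  fix \<phi> assume \<phi>: "\<phi> \<in> hom H\<^sub>G G"
  show "\<exists>\<psi> \<in> hom G G. \<forall>h \<in> H. \<psi> h = \<phi> h"
  proof (cases "H = carrier G")
    case True
    then have "\<phi> \<in> hom G G"
      using \<phi> by (simp add: hom_def)
    then show ?thesis
      by blast
  next
    case proper: False
    consider "\<forall>h \<in> H. \<phi> h = \<one>" | "inj_on \<phi> H"
      using simple_grp_hom_trivial_or_inj[OF H_simple is_group \<phi>] by auto
    then show ?thesis
    proof cases
      case 1
      have "(\<lambda>_. \<one>) \<in> hom G G"
        by (rule homI) simp_all
      then show ?thesis
        using 1 by auto
    next
      case 2
      then show ?thesis
        using injective_hom_extends aut_ext conj proper \<phi> by blast
    qed
  qed
qed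

end

theorem theorem2p3:
  fixes G :: "('a, 'b) monoid_scheme" and H :: "'a set"
  assumes "subgroup H G"
    and "simple_grp (G\<lparr>carrier := H\<rparr>)"
    and "simple_grp G"
    and "co_hopfian G"
  shows "localization_incl G H \<longleftrightarrow>
    (\<exists>j \<in> hom (AutoGroup (G\<lparr>carrier := H\<rparr>)) (AutoGroup G).
        inj_on j (auto (G\<lparr>carrier := H\<rparr>)) \<and>
        (\<forall>h \<in> H. j (inner_aut (G\<lparr>carrier := H\<rparr>) h) = inner_aut G h)) \<and>
    (\<forall>K. subgroup K G \<and> G\<lparr>carrier := K\<rparr> \<cong> G\<lparr>carrier := H\<rparr> \<longrightarrow>
        (\<exists>\<beta> \<in> auto G. \<beta> ` K = H)) \<and>
    (\<forall>\<alpha> \<in> auto G. (\<forall>h \<in> H. \<alpha> h = h) \<longrightarrow> \<alpha> = (\<lambda>x \<in> carrier G. x))"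
    (is "_ \<longleftrightarrow> ?aut_ext \<and> ?conj \<and> ?centralizer")
proof -
  interpret simple_cohopfian_subgroup G H
    using assms by (simp add: simple_cohopfian_subgroup_def simple_cohopfian_subgroup_axioms_def
        simple_grp_def)
  have "hom_extendable G H \<and> endo_determined_on G H \<longleftrightarrow> ?aut_ext \<and> ?conj \<and> ?centralizer"
  proof
    assume "hom_extendable G H \<and> endo_determined_on G H"
    then show "?aut_ext \<and> ?conj \<and> ?centralizer"
      using aut_extension_if_hom_extendable conjugate_to_H_if_hom_extendable
        auto_fixing_eq_id_if_endo_determined_on[OF _ H_subset] by blast
  next
    assume "?aut_ext \<and> ?conj \<and> ?centralizer"
    then show "hom_extendable G H \<and> endo_determined_on G H"
      using hom_extendable_if_conditions endo_determined_on_if_centralizer_trivial by blast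
  qed
  then show ?thesis
    using localization_incl_iff[OF H_subset] by simp
qed

end
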